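(* Let $\theta>0$, $n\ge1$, and let $h$ be a real number with $h\ge\theta n-\tfrac12$. Then for every partition $\lambda$ with $\ell(\lambda)\le n$, $$I_{(2)}(\lambda_1,\dots,\lambda_n;\theta;h)\le\big(I_{(1)}(\lambda_1,\dots,\lambda_n;\theta;h)\big)^2.$$
   Context: Interpolation $BC_n$ polynomials: for a partition $\mu$ with $\ell(\mu)\le n$, $I_\mu(x_1,\dots,x_n;\theta;h)$ is the unique polynomial in $x_1,\dots,x_n$ with coefficients in $\mathbb C(h)$ such that: it has total degree $2|\mu|$ in $x$; it is a symmetric polynomial in the variables $(x_i-\theta i+h)^2$, $i=1,\dots,n$; $I_\mu(\lambda;\theta;h)=0$ for every partition $\lambda$ with $\ell(\lambda)\le n$ whose diagram does not contain that of $\mu$; and $I_\mu(\mu;\theta;h)=\prod_{(i,j)\in\mu}\big(1+\mu_i-j+\theta(\mu'_j-i)\big)\big(2h-1+\mu_i+j-\theta(\mu'_j+i)\big)$. Here $(1)$ and $(2)$ denote the one-row partitions with one and two boxes; explicitly $I_{(1)}(x;\theta;h)=\sum_i\big((x_i+h-\theta i)^2-(h-\theta i)^2\big)$. The evaluation is at a real value of $h$. *)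

theory Defs
  imports "HOL-Computational_Algebra.Polynomial"
begin

text \<open>Partitions are encoded as functions nat => nat indexed from 1;
  "partition_len n lam" means lam is a partition with at most n nonzero parts.\<close>

definition partition_len :: "nat \<Rightarrow> (nat \<Rightarrow> nat) \<Rightarrow> bool" where
  "partition_len n lam \<longleftrightarrow>
     (\<forall>i j. 1 \<le> i \<longrightarrow> i \<le> j \<longrightarrow> lam j \<le> lam i) \<and> (\<forall>i>n. lam i = 0)"

definition diagram :: "(nat \<Rightarrow> nat) \<Rightarrow> (nat \<times> nat) set" where
  "diagram mu = {(i, j). 1 \<le> i \<and> 1 \<le> j \<and> j \<le> mu i}"

definition conj_part :: "(nat \<Rightarrow> nat) \<Rightarrow> nat \<Rightarrow> nat" where
  "conj_part mu j = card {i. 1 \<le> i \<and> j \<le> mu i}"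

definition norm_value :: "(nat \<Rightarrow> nat) \<Rightarrow> real \<Rightarrow> real \<Rightarrow> real" where
  "norm_value mu th h =
     (\<Prod>(i, j)\<in>diagram mu.
        (1 + real (mu i) - real j + th * (real (conj_part mu j) - real i)) *
        (2 * h - 1 + real (mu i) + real j - th * (real (conj_part mu j) + real i)))"

definition row1 :: "nat \<Rightarrow> nat" where "row1 = (\<lambda>i. if i = 1 then 1 else 0)"
definition row2 :: "nat \<Rightarrow> nat" where "row2 = (\<lambda>i. if i = 1 then 2 else 0)"

definition yvar :: "real \<Rightarrow> real \<Rightarrow> (nat \<Rightarrow> real) \<Rightarrow> nat \<Rightarrow> real" where
  "yvar th h x i = (x i - th * real i + h)^2"

definition psum :: "nat \<Rightarrow> nat \<Rightarrow> real \<Rightarrow> real \<Rightarrow> (nat \<Rightarrow> real) \<Rightarrow> real" where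
  "psum k n th h x = (\<Sum>i=1..n. (yvar th h x i) ^ k)"

text \<open>Characterisation of I_(2): F h x is, for each h, a symmetric polynomial of
  degree \<le> 2 in the y_i (i.e. total degree \<le> 4 = 2|(2)| in x), spanned by
  1, p1, p1^2, p2, with coefficients depending polynomially on h; it vanishes at all
  partitions (length \<le> n) not containing (2), and takes the prescribed value at (2).\<close>
definition I2_char :: "nat \<Rightarrow> real \<Rightarrow> (real \<Rightarrow> (nat \<Rightarrow> real) \<Rightarrow> real) \<Rightarrow> bool" where
  "I2_char n th F \<longleftrightarrow>
     (\<exists>a b c d :: real poly. \<forall>h x.
        F h x = poly a h + poly b h * psum 1 n th h x + poly c h * (psum 1 n th h x)^2
                + poly d h * psum 2 n th h x) \<and>
     (\<forall>h lam. partition_len n lam \<longrightarrow> \<not> (diagram row2 \<subseteq> diagram lam) \<longrightarrow>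
        F h (\<lambda>i. real (lam i)) = 0) \<and>
     (\<forall>h. F h (\<lambda>i. real (row2 i)) = norm_value row2 th h)"

definition I2 :: "nat \<Rightarrow> real \<Rightarrow> real \<Rightarrow> (nat \<Rightarrow> real) \<Rightarrow> real" where
  "I2 n th h x = (THE F. I2_char n th F) h x"

definition I1 :: "nat \<Rightarrow> real \<Rightarrow> real \<Rightarrow> (nat \<Rightarrow> real) \<Rightarrow> real" where
  "I1 n th h x = (\<Sum>i=1..n. (x i + h - th * real i)^2 - (h - th * real i)^2)"

end

theory Submission
  imports Defs
begin

(* I_(2) is given explicitly by F = (S_2 - A S_1 + theta S_1^2) / (1 + theta), where
   S_k = p_k(x) - p_k(0) are the power sums of the y_i taken relative to the empty partition and A
   is a constant depending on h and theta. A partition not containing (2) is a column (1^k); on it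
   the increments w_i = y_i(1) - y_i(0) = 2h + 1 - 2 theta i form an arithmetic progression, and for
   such a progression sum w_i^3 is a quadratic in sum w_i, which makes F vanish. Uniqueness: a
   combination of 1, p_1, p_1^2, p_2 vanishing at (), (1), (1,1) and (2) is zero for all but
   finitely many h, and continuity in h handles the rest.
   For the inequality put d_i = y_i(lambda) - y_i(0), which is nonnegative once h >= theta n - 1/2.
   Then S_2 - A S_1 = sum (d_i^2 + (2 y_i(0) - A) d_i) <= sum d_i^2 <= S_1^2, because
   2 y_i(0) <= A, and F <= S_1^2 follows. *)

lemma sum_arith_prog:
  "(\<Sum>i=1..k. a - d * real i) = real k * a - d * real k * (real k + 1) / 2"
  by (induction k) (simp_all add: field_simps)

lemma sum_cubes_arith_prog:
  fixes a d :: real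
  shows "(\<Sum>i=1..k. (a - d * real i) ^ 3)
    = ((a - d)\<^sup>2 + d * (a - d)) * (\<Sum>i=1..k. a - d * real i) - d * (\<Sum>i=1..k. a - d * real i)\<^sup>2"
proof (induction k)
  case 0
  then show ?case by simp
next
  case (Suc k)
  let ?c = "(a - d)\<^sup>2 + d * (a - d)" and ?S = "\<Sum>i=1..k. a - d * real i"
    and ?w = "a - d * real (Suc k)"
  have square: "?w\<^sup>2 = ?c - 2 * d * ?S - d * ?w"
    unfolding sum_arith_prog by (simp add: field_simps power2_eq_square)
  have "(\<Sum>i=1..Suc k. (a - d * real i) ^ 3) = ?c * ?S - d * ?S\<^sup>2 + ?w * ?w\<^sup>2"
    using Suc.IH by (simp add: power3_eq_cube power2_eq_square)
  also have "\<dots> = ?c * (?S + ?w) - d * (?S + ?w)\<^sup>2"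
    unfolding square by (simp add: algebra_simps power2_eq_square)
  finally show ?case by simp
qed

lemma sum_squares_le_square_sum:
  fixes d :: "'a \<Rightarrow> 'b::linordered_semidom"
  assumes "finite I" and "\<And>i. i \<in> I \<Longrightarrow> 0 \<le> d i"
  shows "(\<Sum>i\<in>I. (d i)\<^sup>2) \<le> (\<Sum>i\<in>I. d i)\<^sup>2"
proof -
  have "(\<Sum>i\<in>I. (d i)\<^sup>2) \<le> (\<Sum>i\<in>I. d i * (\<Sum>j\<in>I. d j))"
  proof (rule sum_mono)
    fix i assume "i \<in> I"
    then have "d i \<le> (\<Sum>j\<in>I. d j)"
      using assms by (intro member_le_sum) auto
    then show "(d i)\<^sup>2 \<le> d i * (\<Sum>j\<in>I. d j)"
      using assms \<open>i \<in> I\<close> by (simp add: power2_eq_square mult_left_mono)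
  qed
  also have "\<dots> = (\<Sum>i\<in>I. d i)\<^sup>2" by (simp add: sum_distrib_right power2_eq_square)
  finally show ?thesis .
qed

lemma isCont_eq_off_finite:
  fixes f :: "'a::{perfect_space, t2_space} \<Rightarrow> 'b::t2_space"
  assumes "finite S" and "isCont f x" and "\<And>t. t \<notin> S \<Longrightarrow> f t = c"
  shows "f x = c"
proof -
  have "eventually (\<lambda>t. \<forall>s\<in>S. t \<noteq> s) (at x)"
    using assms(1) by (intro eventually_ball_finite) (auto intro: eventually_neq_at_within)
  then have "eventually (\<lambda>t. f t = c) (at x)"
    by eventually_elim (use assms(3) in blast)
  then have "f \<midarrow>x\<rightarrow> c" by (rule tendsto_eventually)
  with assms(2) show ?thesis by (simp add: isCont_def LIM_unique)
qed

definition psum_diff :: "nat \<Rightarrow> nat \<Rightarrow> real \<Rightarrow> real \<Rightarrow> (nat \<Rightarrow> real) \<Rightarrow> real" where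
  "psum_diff k n th h x = psum k n th h x - psum k n th h (\<lambda>_. 0)"

(* The increment (u + 1)^2 - u^2 of y_i = (x_i + u)^2, u = h - theta i, when row i gets its first box. *)
definition yinc :: "real \<Rightarrow> real \<Rightarrow> nat \<Rightarrow> real" where
  "yinc th h i = 2 * h + 1 - 2 * th * real i"

(* Chosen so that I2_formula vanishes at the one-box partition (1). *)
definition I2_coeff :: "real \<Rightarrow> real \<Rightarrow> real" where
  "I2_coeff th h = ((yinc th h 1)\<^sup>2 + 2 * th * yinc th h 1 + 1) / 2"

definition I2_formula :: "nat \<Rightarrow> real \<Rightarrow> real \<Rightarrow> (nat \<Rightarrow> real) \<Rightarrow> real" where
  "I2_formula n th h x =
     (psum_diff 2 n th h x - I2_coeff th h * psum_diff 1 n th h x + th * (psum_diff 1 n th h x)\<^sup>2)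
     / (1 + th)"

definition column :: "nat \<Rightarrow> nat \<Rightarrow> nat" where
  "column k i = (if i \<le> k then 1 else 0)"

lemma psum_diff_eq_sum:
  "psum_diff k n th h x = (\<Sum>i=1..n. yvar th h x i ^ k - yvar th h (\<lambda>_. 0) i ^ k)"
  by (simp add: psum_diff_def psum_def sum_subtractf)

lemma psum_cong:
  "(\<And>i. i \<in> {1..n} \<Longrightarrow> x i = x' i) \<Longrightarrow> psum k n th h x = psum k n th h x'"
  by (simp add: psum_def yvar_def)

lemma psum_diff_truncate:
  assumes "m \<le> n" and "\<And>i. m < i \<Longrightarrow> i \<le> n \<Longrightarrow> x i = 0"
  shows "psum_diff k n th h x = psum_diff k m th h x"
  unfolding psum_diff_eq_sum using assms
  by (intro sum.mono_neutral_right) (auto simp: yvar_def)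

lemma I1_eq_psum_diff: "I1 n th h x = psum_diff 1 n th h x"
  unfolding I1_def psum_diff_eq_sum yvar_def
  by (rule sum.cong) (auto simp: algebra_simps)

lemma psum_zero_poly: "\<exists>p. \<forall>h. poly p h = psum k n th h (\<lambda>_. 0)"
proof
  show "\<forall>h. poly (\<Sum>i=1..n. [:- (th * real i), 1:] ^ (2 * k)) h = psum k n th h (\<lambda>_. 0)"
    by (simp add: poly_sum psum_def yvar_def power_mult)
qed

lemma I2_formula_poly_span:
  assumes "1 + th \<noteq> 0"
  shows "\<exists>a b c d :: real poly. \<forall>h x.
     I2_formula n th h x = poly a h + poly b h * psum 1 n th h x + poly c h * (psum 1 n th h x)\<^sup>2
                           + poly d h * psum 2 n th h x"
proof -
  obtain P1 P2 where P1: "\<And>h. poly P1 h = psum 1 n th h (\<lambda>_. 0)"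
    and P2: "\<And>h. poly P2 h = psum 2 n th h (\<lambda>_. 0)"
    using psum_zero_poly by metis
  define PA where "PA = smult (1/2) ([:1 - 2 * th, 2:]\<^sup>2 + smult (2 * th) [:1 - 2 * th, 2:] + 1)"
  have PA: "poly PA h = I2_coeff th h" for h
    by (simp add: PA_def I2_coeff_def yinc_def algebra_simps)
  let ?r = "1 / (1 + th)"
  have "I2_formula n th h x =
      poly (smult ?r (- P2 + PA * P1 + smult th (P1\<^sup>2))) h
      + poly (smult ?r (- PA - smult (2 * th) P1)) h * psum 1 n th h x
      + poly [:th / (1 + th):] h * (psum 1 n th h x)\<^sup>2 + poly [:?r:] h * psum 2 n th h x" for h x
    using assms
    by (simp add: I2_formula_def psum_diff_def P1 P2 PA divide_simps)
      (simp add: algebra_simps power2_eq_square)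
  then show ?thesis by blast
qed

lemma psum_diff_ones:
  "psum_diff 1 k th h (\<lambda>_. 1) = (\<Sum>i=1..k. yinc th h i)"
  "psum_diff 2 k th h (\<lambda>_. 1) = (\<Sum>i=1..k. (yinc th h i ^ 3 + yinc th h i) / 2)"
  unfolding psum_diff_eq_sum
  by (auto intro!: sum.cong simp: yvar_def yinc_def field_simps power2_eq_square power3_eq_cube)

lemma I2_formula_ones: "I2_formula k th h (\<lambda>_. 1) = 0"
proof -
  have yinc_arith: "yinc th h i = (2 * h + 1) - 2 * th * real i" for i
    by (simp add: yinc_def)
  have "psum_diff 2 k th h (\<lambda>_. 1) = (I2_coeff th h - th * psum_diff 1 k th h (\<lambda>_. 1)) * psum_diff 1 k th h (\<lambda>_. 1)"
    unfolding psum_diff_ones sum_divide_distrib[symmetric] sum.distrib yinc_arith sum_cubes_arith_prog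
      I2_coeff_def
    by (simp add: field_simps power2_eq_square)
  then show ?thesis by (simp add: I2_formula_def algebra_simps power2_eq_square)
qed

lemma psum_diff_column:
  "k \<le> n \<Longrightarrow> psum_diff j n th h (\<lambda>i. real (column k i)) = psum_diff j k th h (\<lambda>_. 1)"
  by (subst psum_diff_truncate[of k]) (auto simp: column_def psum_diff_def intro: psum_cong)

lemma I2_formula_column:
  "k \<le> n \<Longrightarrow> I2_formula n th h (\<lambda>i. real (column k i)) = 0"
  using I2_formula_ones[of k th h] by (simp add: I2_formula_def psum_diff_column)

lemma partition_len_column: "k \<le> n \<Longrightarrow> partition_len n (column k)"
  by (auto simp: partition_len_def column_def)

lemma partition_le_one_eq_column:
  assumes "partition_len n lam" and "lam 1 \<le> 1"
  obtains k where "k \<le> n" and "\<And>i. i \<in> {1..n} \<Longrightarrow> lam i = column k i"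
proof -
  have antitone: "lam j \<le> lam i" if "1 \<le> i" "i \<le> j" for i j
    using assms(1) that by (auto simp: partition_len_def)
  have "\<exists>k\<le>m. \<forall>i\<in>{1..m}. lam i = column k i" for m
  proof (induction m)
    case 0
    then show ?case by simp
  next
    case (Suc m)
    then obtain k where k: "k \<le> m" "\<forall>i\<in>{1..m}. lam i = column k i" by blast
    show ?case
    proof (cases "lam (Suc m) = 0")
      case True
      with k show ?thesis by (auto simp: column_def le_Suc_eq intro!: exI[of _ k])
    next
      case False
      have "lam i = 1" if "i \<in> {1..Suc m}" for i
        using antitone[of i "Suc m"] antitone[of 1 i] assms(2) False that by auto
      then show ?thesis by (auto simp: column_def intro!: exI[of _ "Suc m"])
    qed
  qed
  then show ?thesis using that by blast
qed

lemma I2_formula_vanishes: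
  assumes "partition_len n lam" and "lam 1 \<le> 1"
  shows "I2_formula n th h (\<lambda>i. real (lam i)) = 0"
proof -
  obtain k where "k \<le> n" and lam: "\<And>i. i \<in> {1..n} \<Longrightarrow> lam i = column k i"
    using partition_le_one_eq_column[OF assms] by blast
  then have "psum j n th h (\<lambda>i. real (lam i)) = psum j n th h (\<lambda>i. real (column k i))" for j
    by (auto intro: psum_cong)
  then show ?thesis
    using I2_formula_column[OF \<open>k \<le> n\<close>] by (simp add: I2_formula_def psum_diff_def)
qed

lemma psum_diff_row2:
  assumes "n \<ge> 1"
  shows "psum_diff 1 n th h (\<lambda>i. real (row2 i)) = 2 * (yinc th h 1 + 1)"
    and "psum_diff 2 n th h (\<lambda>i. real (row2 i))
      = (yinc th h 1 + 1) * ((yinc th h 1)\<^sup>2 + 2 * yinc th h 1 + 5)"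
proof -
  have truncate:
    "psum_diff k n th h (\<lambda>i. real (row2 i)) = psum_diff k 1 th h (\<lambda>i. real (row2 i))" for k
    using assms by (intro psum_diff_truncate) (auto simp: row2_def)
  show "psum_diff 1 n th h (\<lambda>i. real (row2 i)) = 2 * (yinc th h 1 + 1)"
    and "psum_diff 2 n th h (\<lambda>i. real (row2 i))
      = (yinc th h 1 + 1) * ((yinc th h 1)\<^sup>2 + 2 * yinc th h 1 + 5)"
    unfolding truncate
    by (simp_all add: psum_diff_eq_sum yvar_def yinc_def row2_def algebra_simps power2_eq_square)
qed

lemma norm_value_row2: "norm_value row2 th h = 2 * (yinc th h 1 + 1) * (yinc th h 1 + 2)"
proof -
  have "diagram row2 = {(1, 1), (1, 2)}"
    by (auto simp: diagram_def row2_def split: if_splits)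
  moreover have "{i. 1 \<le> i \<and> j \<le> row2 i} = {1}" if "j \<in> {1, 2}" for j
    using that by (auto simp: row2_def)
  then have "conj_part row2 1 = 1" "conj_part row2 2 = 1"
    by (simp_all add: conj_part_def)
  ultimately show ?thesis
    by (simp add: norm_value_def row2_def yinc_def algebra_simps)
qed

lemma I2_formula_row2:
  assumes "1 + th \<noteq> 0" and "n \<ge> 1"
  shows "I2_formula n th h (\<lambda>i. real (row2 i)) = norm_value row2 th h"
  unfolding I2_formula_def psum_diff_row2[OF assms(2)] norm_value_row2 I2_coeff_def
  using assms(1) by (simp add: divide_simps) (simp add: algebra_simps power2_eq_square)

lemma row2_subset_diagram_iff: "diagram row2 \<subseteq> diagram lam \<longleftrightarrow> 2 \<le> lam 1"
  by (auto simp: diagram_def row2_def subset_iff)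

lemma I2_char_I2_formula:
  assumes "1 + th \<noteq> 0" and "n \<ge> 1"
  shows "I2_char n th (I2_formula n th)"
  unfolding I2_char_def
  using I2_formula_poly_span[OF assms(1)] I2_formula_vanishes I2_formula_row2[OF assms]
  by (auto simp: row2_subset_diagram_iff)

lemma I2_formula_one_var:
  assumes "1 + th \<noteq> 0"
  shows "I2_formula 1 th h x = psum_diff 1 1 th h x * (psum_diff 1 1 th h x - yinc th h 1)"
proof -
  have "yvar th h (\<lambda>_. 0) 1 = (h - th)\<^sup>2" by (simp add: yvar_def)
  with assms show ?thesis
    by (simp add: I2_formula_def psum_diff_eq_sum I2_coeff_def yinc_def divide_simps)
      (simp add: algebra_simps power2_eq_square power4_eq_xxxx)
qed

lemma psum_span_rebase:
  assumes "1 + th \<noteq> 0"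
  obtains a b c e where "\<And>x. \<alpha> + \<beta> * psum 1 n th h x + \<gamma> * (psum 1 n th h x)\<^sup>2 + \<delta> * psum 2 n th h x
    = a + b * psum_diff 1 n th h x + c * (psum_diff 1 n th h x)\<^sup>2 + e * I2_formula n th h x"
proof
  let ?P1 = "psum 1 n th h (\<lambda>_. 0)" and ?P2 = "psum 2 n th h (\<lambda>_. 0)"
  show "\<alpha> + \<beta> * psum 1 n th h x + \<gamma> * (psum 1 n th h x)\<^sup>2 + \<delta> * psum 2 n th h x
    = (\<alpha> + \<beta> * ?P1 + \<gamma> * ?P1\<^sup>2 + \<delta> * ?P2)
      + (\<beta> + 2 * \<gamma> * ?P1 + \<delta> * I2_coeff th h) * psum_diff 1 n th h x
      + (\<gamma> - th * \<delta>) * (psum_diff 1 n th h x)\<^sup>2 + (\<delta> * (1 + th)) * I2_formula n th h x" for x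
  proof -
    have "(\<delta> * (1 + th)) * I2_formula n th h x = \<delta> * (psum_diff 2 n th h x
        - I2_coeff th h * psum_diff 1 n th h x + th * (psum_diff 1 n th h x)\<^sup>2)"
      using assms by (simp add: I2_formula_def)
    then show ?thesis by (simp add: psum_diff_def algebra_simps power2_eq_square)
  qed
qed

lemma I2_span_vanishing_imp_zero:
  assumes th: "1 + th \<noteq> 0" and n: "n \<ge> 1"
    and generic: "yinc th h 1 \<noteq> 0" "yinc th h 1 + 1 \<noteq> 0" "yinc th h 1 + 2 \<noteq> 0"
      "yinc th h 2 \<noteq> 0" "yinc th h 1 + yinc th h 2 \<noteq> 0"
    and D: "\<And>x. D x = \<alpha> + \<beta> * psum 1 n th h x + \<gamma> * (psum 1 n th h x)\<^sup>2 + \<delta> * psum 2 n th h x"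
    and vanish: "\<And>lam. partition_len n lam \<Longrightarrow> lam 1 \<le> 1 \<Longrightarrow> D (\<lambda>i. real (lam i)) = 0"
    and row2: "D (\<lambda>i. real (row2 i)) = 0"
  shows "D x = 0"
proof -
  obtain a b c e where D': "\<And>x. D x
      = a + b * psum_diff 1 n th h x + c * (psum_diff 1 n th h x)\<^sup>2 + e * I2_formula n th h x"
    using psum_span_rebase[OF th] D by metis
  \<comment> \<open>In this basis the values at the columns (), (1), (1,1) and at (2) form a triangular system.\<close>
  define w where "w = yinc th h 1"
  define v where "v = yinc th h 2"
  have column: "a + b * s + c * s\<^sup>2 = 0" if "k \<le> n" and "s = (\<Sum>i=1..k. yinc th h i)" for k s
  proof -
    have "column k 1 \<le> 1" by (simp add: column_def)
    then have "D (\<lambda>i. real (column k i)) = 0"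
      using vanish partition_len_column \<open>k \<le> n\<close> by blast
    moreover have "D (\<lambda>i. real (column k i)) = a + b * s + c * s\<^sup>2"
      unfolding D' I2_formula_column[OF \<open>k \<le> n\<close>] psum_diff_column[OF \<open>k \<le> n\<close>]
        psum_diff_ones(1) that(2) by simp
    ultimately show ?thesis by simp
  qed
  have "a = 0" using column[of 0] by simp
  have "w * (b + c * w) = 0" using column[of 1 w] n \<open>a = 0\<close> by (simp add: w_def power2_eq_square algebra_simps)
  then have "b + c * w = 0" using generic(1) by (simp add: w_def)
  then have bw: "b = - (c * w)" by (simp add: eq_neg_iff_add_eq_0)
  have "D (\<lambda>i. real (row2 i)) = b * (2 * (w + 1)) + c * (2 * (w + 1))\<^sup>2 + e * (2 * (w + 1) * (w + 2))"
    unfolding D' psum_diff_row2[OF n] I2_formula_row2[OF th n] norm_value_row2 w_def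
    using \<open>a = 0\<close> by simp
  then have "2 * (w + 1) * ((w + 2) * (c + e)) = 0"
    using row2 bw by (simp add: algebra_simps power2_eq_square)
  then have ce: "c + e = 0" using generic(2,3) by (simp add: w_def)
  show ?thesis
  proof (cases "n \<ge> 2")
    case True
    have "(\<Sum>i=1..2. yinc th h i) = w + v" by (simp add: w_def v_def numeral_2_eq_2)
    then have "(w + v) * (b + c * (w + v)) = 0"
      using column[of 2 "w + v"] True \<open>a = 0\<close> by (simp add: w_def v_def power2_eq_square algebra_simps)
    then have "b + c * (w + v) = 0" using generic(5) by (simp add: w_def v_def)
    then have "c * v = 0" using bw by (simp add: algebra_simps)
    then have "c = 0" using generic(4) by (simp add: v_def)
    then show ?thesis using D' \<open>a = 0\<close> bw ce by simp
  next
    case False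
    then have "n = 1" using n by simp
    \<comment> \<open>(1,1) is not available, but for one variable I2_formula is itself a quadratic in S_1.\<close>
    have "D x = (c + e) * psum_diff 1 1 th h x * (psum_diff 1 1 th h x - w)"
      unfolding D' \<open>n = 1\<close> I2_formula_one_var[OF th]
      using \<open>a = 0\<close> bw by (simp add: w_def algebra_simps power2_eq_square)
    then show ?thesis using ce by simp
  qed
qed

lemma I2_char_isCont: "I2_char n th F \<Longrightarrow> isCont (\<lambda>h. F h x) h"
  unfolding I2_char_def psum_def yvar_def by (auto intro!: continuous_intros)

lemma I2_char_vanishes:
  "I2_char n th F \<Longrightarrow> partition_len n lam \<Longrightarrow> lam 1 \<le> 1 \<Longrightarrow> F h (\<lambda>i. real (lam i)) = 0"
  unfolding I2_char_def by (simp add: row2_subset_diagram_iff)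

lemma I2_char_row2: "I2_char n th F \<Longrightarrow> F h (\<lambda>i. real (row2 i)) = norm_value row2 th h"
  unfolding I2_char_def by blast

lemma I2_char_unique:
  assumes th: "1 + th \<noteq> 0" and n: "n \<ge> 1" and F: "I2_char n th F" and G: "I2_char n th G"
  shows "F = G"
proof (intro ext)
  fix h x
  obtain a b c d :: "real poly" where Fp: "\<And>h x. F h x = poly a h + poly b h * psum 1 n th h x
      + poly c h * (psum 1 n th h x)\<^sup>2 + poly d h * psum 2 n th h x"
    using F unfolding I2_char_def by blast
  obtain a' b' c' d' :: "real poly" where Gp: "\<And>h x. G h x = poly a' h + poly b' h * psum 1 n th h x
      + poly c' h * (psum 1 n th h x)\<^sup>2 + poly d' h * psum 2 n th h x"
    using G unfolding I2_char_def by blast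
  define S where "S = (\<lambda>t. yinc th t 1) -` {0, -1, -2} \<union> (\<lambda>t. yinc th t 2) -` {0}
    \<union> (\<lambda>t. yinc th t 1 + yinc th t 2) -` {0}"
  have "finite S"
    unfolding S_def by (intro finite_UnI finite_vimageI) (auto simp: inj_def yinc_def)
  \<comment> \<open>Only at the finitely many h in S do two of the evaluation points collide.\<close>
  have "F t x - G t x = 0" if "t \<notin> S" for t
  proof (rule I2_span_vanishing_imp_zero[OF th n, where D = "\<lambda>y. F t y - G t y"])
    show "yinc th t 1 \<noteq> 0" "yinc th t 1 + 1 \<noteq> 0" "yinc th t 1 + 2 \<noteq> 0"
      "yinc th t 2 \<noteq> 0" "yinc th t 1 + yinc th t 2 \<noteq> 0"
      using that by (auto simp: S_def)
    show "F t y - G t y = (poly a t - poly a' t) + (poly b t - poly b' t) * psum 1 n th t y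
        + (poly c t - poly c' t) * (psum 1 n th t y)\<^sup>2 + (poly d t - poly d' t) * psum 2 n th t y" for y
      unfolding Fp Gp by (simp add: algebra_simps)
    show "F t (\<lambda>i. real (lam i)) - G t (\<lambda>i. real (lam i)) = 0" if "partition_len n lam" "lam 1 \<le> 1" for lam
      using I2_char_vanishes[OF F that] I2_char_vanishes[OF G that] by simp
    show "F t (\<lambda>i. real (row2 i)) - G t (\<lambda>i. real (row2 i)) = 0"
      using I2_char_row2[OF F] I2_char_row2[OF G] by simp
  qed
  moreover have "isCont (\<lambda>t. F t x - G t x) h"
    using I2_char_isCont[OF F] I2_char_isCont[OF G] by (intro continuous_intros)
  ultimately have "F h x - G h x = 0"
    using isCont_eq_off_finite[OF \<open>finite S\<close>] by blast
  then show "F h x = G h x" by simp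
qed

lemma I2_eq_I2_formula:
  assumes "1 + th \<noteq> 0" and "n \<ge> 1"
  shows "I2 n th = I2_formula n th"
proof -
  have "(THE F. I2_char n th F) = I2_formula n th"
    using I2_char_I2_formula[OF assms] I2_char_unique[OF assms] by (intro the_equality)
  then show ?thesis by (simp add: I2_def[abs_def])
qed

lemma yvar_zero_le_yvar_of_nat:
  assumes "th * real i \<le> h + 1/2"
  shows "yvar th h (\<lambda>_. 0) i \<le> yvar th h (\<lambda>i. real (m i)) i"
proof (cases "m i = 0")
  case False
  then have "0 \<le> real (m i) * (real (m i) + 2 * (h - th * real i))"
    using assms by (intro mult_nonneg_nonneg) auto
  then show ?thesis by (simp add: yvar_def algebra_simps power2_eq_square)
qed (simp add: yvar_def)

lemma twice_yvar_zero_le_I2_coeff: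
  assumes "th \<ge> 0" and "1 \<le> i" and "th * real i \<le> h + 1/2"
  shows "2 * yvar th h (\<lambda>_. 0) i \<le> I2_coeff th h"
proof -
  define u where "u = h - th * real i"
  define w where "w = yinc th h 1"
  have "th * 1 \<le> th * real i" using assms(1,2) by (intro mult_left_mono) auto
  then have "2 * u + 1 \<le> w" and "0 \<le> 2 * u + 1" using assms(3) by (auto simp: u_def w_def yinc_def)
  then have "0 \<le> w" and "0 \<le> 2 * th * w" using assms(1) by simp_all
  have "(2 * u)\<^sup>2 \<le> w\<^sup>2 + 2 * th * w + 1"
  proof (cases "u \<ge> 0")
    case True
    then have "(2 * u)\<^sup>2 \<le> (w - 1)\<^sup>2"
      using \<open>2 * u + 1 \<le> w\<close> by (intro power_mono) auto
    then show ?thesis using \<open>0 \<le> w\<close> \<open>0 \<le> 2 * th * w\<close>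
      by (simp add: power2_eq_square algebra_simps)
  next
    case False
    then have "(2 * u)\<^sup>2 \<le> 1"
      unfolding abs_square_le_1 using \<open>0 \<le> 2 * u + 1\<close> by linarith
    then show ?thesis using \<open>0 \<le> 2 * th * w\<close> by (simp add: add_increasing)
  qed
  moreover have "(2 * u)\<^sup>2 = 4 * yvar th h (\<lambda>_. 0) i"
    by (simp add: u_def yvar_def power2_eq_square algebra_simps)
  ultimately show ?thesis by (simp add: w_def I2_coeff_def)
qed

lemma I2_formula_le_square:
  fixes m :: "nat \<Rightarrow> nat"
  assumes "th \<ge> 0" and "th * real n \<le> h + 1/2"
  shows "I2_formula n th h (\<lambda>i. real (m i)) \<le> (psum_diff 1 n th h (\<lambda>i. real (m i)))\<^sup>2"
proof -
  define x where "x = (\<lambda>i. real (m i))"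
  define d where "d i = yvar th h x i - yvar th h (\<lambda>_. 0) i" for i
  define A where "A = I2_coeff th h"
  have below_n: "th * real i \<le> h + 1/2" if "i \<in> {1..n}" for i
    using that assms mult_left_mono[of "real i" "real n" th] by auto
  have d_nonneg: "0 \<le> d i" if "i \<in> {1..n}" for i
    using yvar_zero_le_yvar_of_nat[OF below_n[OF that]] by (simp add: d_def x_def)
  have S1: "psum_diff 1 n th h x = (\<Sum>i=1..n. d i)"
    by (simp add: psum_diff_eq_sum d_def)
  have "psum_diff 2 n th h x - A * psum_diff 1 n th h x
      = (\<Sum>i=1..n. (d i)\<^sup>2 + (2 * yvar th h (\<lambda>_. 0) i - A) * d i)"
    unfolding S1 psum_diff_eq_sum sum_distrib_left sum_subtractf[symmetric]
    by (rule sum.cong) (simp_all add: d_def algebra_simps power2_eq_square)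
  also have "\<dots> \<le> (\<Sum>i=1..n. (d i)\<^sup>2)"
  proof (rule sum_mono)
    fix i assume "i \<in> {1..n}"
    then have "(2 * yvar th h (\<lambda>_. 0) i - A) * d i \<le> 0"
      using twice_yvar_zero_le_I2_coeff[OF assms(1) _ below_n] d_nonneg
      by (intro mult_nonpos_nonneg) (auto simp: A_def)
    then show "(d i)\<^sup>2 + (2 * yvar th h (\<lambda>_. 0) i - A) * d i \<le> (d i)\<^sup>2" by simp
  qed
  also have "\<dots> \<le> (psum_diff 1 n th h x)\<^sup>2"
    unfolding S1 using d_nonneg by (intro sum_squares_le_square_sum) auto
  finally have "psum_diff 2 n th h x - A * psum_diff 1 n th h x + th * (psum_diff 1 n th h x)\<^sup>2
      \<le> (psum_diff 1 n th h x)\<^sup>2 * (1 + th)"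
    by (simp add: algebra_simps)
  then show ?thesis
    using assms(1) by (simp add: I2_formula_def A_def x_def divide_le_eq)
qed

theorem lemma4p1:
  fixes th h :: real and n :: nat and lam :: "nat \<Rightarrow> nat"
  assumes "th > 0" and "n \<ge> 1" and "h \<ge> th * real n - 1/2"
    and "partition_len n lam"
  shows "I2 n th h (\<lambda>i. real (lam i)) \<le> (I1 n th h (\<lambda>i. real (lam i)))^2"
proof -
  \<comment> \<open>The bound holds at every point of N^n.\<close>
  have "I2 n th = I2_formula n th"
    using assms(1,2) by (intro I2_eq_I2_formula) auto
  moreover have "I2_formula n th h (\<lambda>i. real (lam i)) \<le> (psum_diff 1 n th h (\<lambda>i. real (lam i)))\<^sup>2"
    using assms(1,3) by (intro I2_formula_le_square) auto
  ultimately show ?thesis by (simp add: I1_eq_psum_diff)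
qed

end
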